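(* Let $m\equiv4\pmod8$, let $\mathfrak v_m$ be the irreducible $C(m)$-module, and let $\mathfrak v_m^p=\mathfrak w_+^p\oplus\mathfrak w_-^p$ be the decomposition into eigenspaces of $K_m$ with eigenvalues $\pm1$. (1) If $\mathcal L_1\subset\mathfrak w_+^p$ is a $C^+(m)$-submodule and $\mathcal L_1^\perp$ is its orthogonal complement in $\mathfrak w_+^p$, then $\mathcal L=\mathcal L_1+J_m(\mathcal L_1^\perp)$ is a Lagrangian subspace of $\mathfrak v_m^p$. (2) Every Lagrangian subspace of $\mathfrak v_m^p$ is of this form.
   Context: $C(m)$ is the real Clifford algebra of $\mathbb R^m$ (relations $z^2=-\langle z,z\rangle1$), $C^+(m)$ its even subalgebra (generated by products of two elements of $\mathbb R^m$). Fix an orthonormal basis $z_1,\dots,z_m$ of $\mathbb R^m$, $J_i=J_{z_i}$, and $K_m=J_1\cdots J_m$ (symmetric with $K_m^2=1$ when $m\equiv0\pmod4$). $\mathfrak v_m^p$ is the direct sum of $p$ copies of the irreducible module, with an inner product making each $J_z$ skew-symmetric, and bracket $\mathfrak v\wedge\mathfrak v\to\mathbb R^m$ given by $\langle z,[u,v]\rangle=(J_zu,v)$. A Lagrangian subspace is $\mathcal L\subset\mathfrak v_m^p$ with $[\mathcal L,\mathcal L]=0$ and $\dim\mathcal L=\frac12\dim\mathfrak v_m^p$. *)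

theory Defs
  imports "HOL-Analysis.Analysis"
begin

text \<open>A real Clifford module for C(m): a finite-dimensional real inner product space
  (the type 'v) with operators J 1, ..., J m (J i = J_{z_i} for an orthonormal basis
  z_1..z_m of R^m), linear, skew-symmetric, satisfying the Clifford relations
  J_z^2 = -|z|^2, i.e. J_i^2 = -1 and J_i J_j = - J_j J_i for i ~= j.\<close>
definition clifford_module :: "nat \<Rightarrow> (nat \<Rightarrow> 'v::euclidean_space \<Rightarrow> 'v) \<Rightarrow> bool" where
  "clifford_module m J \<longleftrightarrow>
     (\<forall>i\<in>{1..m}. linear (J i)) \<and>
     (\<forall>i\<in>{1..m}. \<forall>x. J i (J i x) = - x) \<and>
     (\<forall>i\<in>{1..m}. \<forall>j\<in>{1..m}. i \<noteq> j \<longrightarrow> (\<forall>x. J i (J j x) = - J j (J i x))) \<and>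
     (\<forall>i\<in>{1..m}. \<forall>x y. inner (J i x) y = - inner x (J i y))"

fun Kop :: "(nat \<Rightarrow> 'v \<Rightarrow> 'v) \<Rightarrow> nat \<Rightarrow> 'v \<Rightarrow> 'v" where
  "Kop J 0 = id"
| "Kop J (Suc k) = Kop J k \<circ> J (Suc k)"

definition wplus :: "nat \<Rightarrow> (nat \<Rightarrow> 'v::euclidean_space \<Rightarrow> 'v) \<Rightarrow> 'v set" where
  "wplus m J = {x. Kop J m x = x}"

text \<open>Bracket [u,v] in R^m: its z_i-coordinate is <z_i,[u,v]> = (J_i u, v).
  [L,L] = 0 means all these coordinates vanish.\<close>
definition bracket_zero :: "nat \<Rightarrow> (nat \<Rightarrow> 'v::euclidean_space \<Rightarrow> 'v) \<Rightarrow> 'v set \<Rightarrow> bool" where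
  "bracket_zero m J L \<longleftrightarrow> (\<forall>u\<in>L. \<forall>v\<in>L. \<forall>i\<in>{1..m}. inner (J i u) v = 0)"

definition lagrangian :: "nat \<Rightarrow> (nat \<Rightarrow> 'v::euclidean_space \<Rightarrow> 'v) \<Rightarrow> 'v set \<Rightarrow> bool" where
  "lagrangian m J L \<longleftrightarrow> subspace L \<and> bracket_zero m J L \<and> 2 * dim L = DIM('v)"

text \<open>C^+(m)-submodule of w_+: a linear subspace of w_+ invariant under the generators
  J_i J_j of the even subalgebra.\<close>
definition cplus_submodule_of_wplus :: "nat \<Rightarrow> (nat \<Rightarrow> 'v::euclidean_space \<Rightarrow> 'v) \<Rightarrow> 'v set \<Rightarrow> bool" where
  "cplus_submodule_of_wplus m J L1 \<longleftrightarrow> subspace L1 \<and> L1 \<subseteq> wplus m J \<and>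
     (\<forall>i\<in>{1..m}. \<forall>j\<in>{1..m}. \<forall>x\<in>L1. J i (J j x) \<in> L1)"

definition perp_in_wplus :: "nat \<Rightarrow> (nat \<Rightarrow> 'v::euclidean_space \<Rightarrow> 'v) \<Rightarrow> 'v set \<Rightarrow> 'v set" where
  "perp_in_wplus m J L1 = {x \<in> wplus m J. \<forall>y\<in>L1. inner x y = 0}"

definition lag_of :: "nat \<Rightarrow> (nat \<Rightarrow> 'v::euclidean_space \<Rightarrow> 'v) \<Rightarrow> 'v set \<Rightarrow> 'v set" where
  "lag_of m J L1 = {a + J m b | a b. a \<in> L1 \<and> b \<in> perp_in_wplus m J L1}"

end

theory Submission
  imports Defs
begin

text \<open>Hence the space splits orthogonally into the
  eigenspaces w_+ and w_-, each J_i swaps them, and dim w_+ is half the dimension.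
  For L = L_1 + J_m(L_1^\<bottom>) the four cross terms of (J_i u, v) vanish because J_i
  interchanges the eigenspaces and J_m J_i preserves L_1, while
  dim L = dim L_1 + dim L_1^\<bottom> = dim w_+.
  Conversely an isotropic L of half dimension satisfies J_i L = L^\<bottom>, so L is stable
  under every J_i J_j and hence under K; splitting L along w_+ and w_- gives
  L \<subseteq> L_1 + J_m(L_1^\<bottom>) for L_1 = L \<inter> w_+, and equality follows by
  comparing dimensions.\<close>

lemma image_eq_orthogonal_comp_if_half_dim:
  fixes f :: "'a::euclidean_space \<Rightarrow> 'a"
  assumes "linear f" "inj f" "subspace L" "f ` L \<subseteq> L\<^sup>\<bottom>" "2 * dim L = DIM('a)"
  shows "f ` L = L\<^sup>\<bottom>"
proof (rule subspace_dim_equal)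
  have "dim (L\<^sup>\<bottom>) + dim L = DIM('a)"
    using dim_subspace_orthogonal_to_vectors[OF \<open>subspace L\<close> subspace_UNIV]
    by (simp add: orthogonal_comp_def)
  moreover have "dim (f ` L) = dim L"
    using dim_image_eq[OF \<open>linear f\<close>] \<open>inj f\<close> by (simp add: inj_on_subset)
  ultimately show "dim (L\<^sup>\<bottom>) \<le> dim (f ` L)"
    using \<open>2 * dim L = DIM('a)\<close> by simp
qed (use assms linear_subspace_image subspace_orthogonal_comp in auto)

lemma Kop_image_alternating:
  assumes "\<And>i. i \<in> {1..k} \<Longrightarrow> J i ` A \<subseteq> B" "\<And>i. i \<in> {1..k} \<Longrightarrow> J i ` B \<subseteq> A"
  shows "Kop J k ` A \<subseteq> (if even k then A else B) \<and> Kop J k ` B \<subseteq> (if even k then B else A)"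
  using assms
proof (induction k)
  case 0
  then show ?case by simp
next
  case (Suc k)
  have "J (Suc k) ` A \<subseteq> B" "J (Suc k) ` B \<subseteq> A"
    using Suc.prems by auto
  moreover have "Kop J k ` A \<subseteq> (if even k then A else B) \<and> Kop J k ` B \<subseteq> (if even k then B else A)"
    using Suc by simp
  ultimately show ?case
    by (fastforce simp: image_subset_iff)
qed

definition wminus :: "nat \<Rightarrow> (nat \<Rightarrow> 'v::euclidean_space \<Rightarrow> 'v) \<Rightarrow> 'v set" where
  "wminus m J = {x. Kop J m x = - x}"

lemma perp_in_wplus_eq: "perp_in_wplus m J L1 = wplus m J \<inter> L1\<^sup>\<bottom>"
  by (auto simp: perp_in_wplus_def orthogonal_comp_def orthogonal_def inner_commute)

lemma lag_of_eq_sums: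
  "lag_of m J L1 = {a + c |a c. a \<in> L1 \<and> c \<in> J m ` perp_in_wplus m J L1}"
  by (auto simp: lag_of_def)

lemma lagrangian_subspace: "lagrangian m J L \<Longrightarrow> subspace L"
  by (simp add: lagrangian_def)

lemma lagrangian_isotropic:
  "lagrangian m J L \<Longrightarrow> u \<in> L \<Longrightarrow> v \<in> L \<Longrightarrow> i \<in> {1..m} \<Longrightarrow> inner (J i u) v = 0"
  unfolding lagrangian_def bracket_zero_def by blast

lemma lagrangian_dim: "lagrangian m J (L :: 'v::euclidean_space set) \<Longrightarrow> 2 * dim L = DIM('v)"
  by (simp add: lagrangian_def)

context
  fixes m :: nat and J :: "nat \<Rightarrow> 'v::euclidean_space \<Rightarrow> 'v"
  assumes cm: "clifford_module m J"
begin

lemma J_linear: "i \<in> {1..m} \<Longrightarrow> linear (J i)"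
  using cm by (simp add: clifford_module_def)

lemma J_square: "i \<in> {1..m} \<Longrightarrow> J i (J i x) = - x"
  using cm by (simp add: clifford_module_def)

lemma J_anticommute: "i \<in> {1..m} \<Longrightarrow> j \<in> {1..m} \<Longrightarrow> i \<noteq> j \<Longrightarrow> J i (J j x) = - J j (J i x)"
  using cm unfolding clifford_module_def by blast

lemma J_skew: "i \<in> {1..m} \<Longrightarrow> inner (J i x) y = - inner x (J i y)"
  using cm by (simp add: clifford_module_def)

lemma J_inner: "i \<in> {1..m} \<Longrightarrow> inner (J i x) (J i y) = inner x y"
  using J_skew[of i x "J i y"] J_square[of i y] by simp

lemma J_inj: "i \<in> {1..m} \<Longrightarrow> inj (J i)"
  by (metis J_square injI minus_equation_iff)

lemma Kop_linear: "k \<le> m \<Longrightarrow> linear (Kop J k)"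
proof (induction k)
  case 0
  then show ?case by (simp add: linear_iff)
next
  case (Suc k)
  then have "linear (Kop J k \<circ> J (Suc k))"
    by (intro linear_compose J_linear) auto
  then show ?case by (simp only: Kop.simps)
qed

lemma Kop_inner: "k \<le> m \<Longrightarrow> inner (Kop J k x) (Kop J k y) = inner x y"
  by (induction k arbitrary: x y) (simp_all add: J_inner)

lemma J_Kop_commute:
  assumes "k \<le> m" "i \<in> {1..m}"
  shows "J i (Kop J k x) = (-1) ^ (if i \<le> k then k - 1 else k) *\<^sub>R Kop J k (J i x)"
  using assms
proof (induction k arbitrary: x)
  case 0
  then show ?case by simp
next
  case (Suc k)
  let ?s = "(-1::real) ^ (if i \<le> k then k - 1 else k)"
  have IH: "J i (Kop J k y) = ?s *\<^sub>R Kop J k (J i y)" for y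
    using Suc by simp
  show ?case
  proof (cases "i = Suc k")
    case True
    then show ?thesis using IH[of "J (Suc k) x"] by simp
  next
    case False
    have "J i (Kop J (Suc k) x) = ?s *\<^sub>R Kop J k (- J (Suc k) (J i x))"
      using IH[of "J (Suc k) x"] J_anticommute[of i "Suc k" x] Suc.prems False by simp
    also have "\<dots> = - ?s *\<^sub>R Kop J (Suc k) (J i x)"
      using linear_neg[OF Kop_linear] Suc.prems by simp
    also have "- ?s = (-1) ^ (if i \<le> Suc k then Suc k - 1 else Suc k)"
      using False Suc.prems(2) by (cases k) auto
    finally show ?thesis .
  qed
qed

lemma Kop_square: "k \<le> m \<Longrightarrow> Kop J k (Kop J k x) = (-1) ^ (k * (k + 1) div 2) *\<^sub>R x"
proof (induction k arbitrary: x)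
  case 0
  then show ?case by simp
next
  case (Suc k)
  have "Kop J (Suc k) (Kop J (Suc k) x) = Kop J k ((-1) ^ k *\<^sub>R Kop J k (J (Suc k) (J (Suc k) x)))"
    using J_Kop_commute[of k "Suc k"] Suc.prems by simp
  also have "\<dots> = - ((-1) ^ k * (-1) ^ (k * (k + 1) div 2)) *\<^sub>R x"
    using Suc J_square[of "Suc k" x] linear_scale[OF Kop_linear] linear_neg[OF Kop_linear] by simp
  also have "- ((-1) ^ k * (-1) ^ (k * (k + 1) div 2)) = ((-1::real) ^ (Suc k * (Suc k + 1) div 2))"
  proof -
    have "Suc k * (Suc k + 1) div 2 = k * (k + 1) div 2 + k + 1"
      by (induction k) auto
    then show ?thesis by (simp add: power_add)
  qed
  finally show ?case .
qed

context
  assumes four_dvd_m: "4 dvd m" and m_pos: "0 < m"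
begin

lemma m_in_range: "m \<in> {1..m}"
  using m_pos by simp

lemma Kop_involution: "Kop J m (Kop J m x) = x"
proof -
  obtain t where "m = 4 * t" using four_dvd_m by blast
  then have "even (m * (m + 1) div 2)" by simp
  then show ?thesis using Kop_square[of m x] by simp
qed

lemma Kop_J_anticommute: "i \<in> {1..m} \<Longrightarrow> Kop J m (J i x) = - J i (Kop J m x)"
  using J_Kop_commute[of m i x] four_dvd_m m_pos by (auto simp: even_diff_nat dvd_trans[of 2 4 m])

lemma J_wplus: "i \<in> {1..m} \<Longrightarrow> x \<in> wplus m J \<Longrightarrow> J i x \<in> wminus m J"
  by (simp add: wplus_def wminus_def Kop_J_anticommute)

lemma J_wminus: "i \<in> {1..m} \<Longrightarrow> x \<in> wminus m J \<Longrightarrow> J i x \<in> wplus m J"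
  by (simp add: wplus_def wminus_def Kop_J_anticommute linear_neg[OF J_linear])

lemma wplus_wminus_orthogonal: "x \<in> wplus m J \<Longrightarrow> y \<in> wminus m J \<Longrightarrow> inner x y = 0"
  using Kop_inner[of m x y] by (simp add: wplus_def wminus_def)

lemma subspace_wplus: "subspace (wplus m J)"
  using Kop_linear[of m] by (simp add: subspace_def wplus_def linear_0 linear_add linear_scale)

lemma subspace_wminus: "subspace (wminus m J)"
  using Kop_linear[of m] by (simp add: subspace_def wminus_def linear_0 linear_add linear_scale)

lemma wplus_Int_wminus: "wplus m J \<inter> wminus m J = {0}"
proof -
  have "x = 0" if "x \<in> wplus m J" "x \<in> wminus m J" for x
    using wplus_wminus_orthogonal[OF that] by simp
  then show ?thesis
    using subspace_0[OF subspace_wplus] subspace_0[OF subspace_wminus] by blast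
qed

lemma Kop_invariant_decomp:
  assumes "subspace S" "Kop J m ` S \<subseteq> S" "x \<in> S"
  obtains p q where "p \<in> S \<inter> wplus m J" "q \<in> S \<inter> wminus m J" "x = p + q"
proof
  have K: "linear (Kop J m)" and "Kop J m x \<in> S"
    using Kop_linear assms by auto
  then show "(1/2) *\<^sub>R (x + Kop J m x) \<in> S \<inter> wplus m J"
    and "(1/2) *\<^sub>R (x - Kop J m x) \<in> S \<inter> wminus m J"
    using assms by (auto simp: wplus_def wminus_def linear_add[OF K] linear_diff[OF K]
        linear_scale[OF K] Kop_involution subspace_add subspace_diff subspace_scale algebra_simps)
  show "x = (1/2) *\<^sub>R (x + Kop J m x) + (1/2) *\<^sub>R (x - Kop J m x)"
    using scaleR_add_right[of "1/2" "x + Kop J m x" "x - Kop J m x"] by (simp add: scaleR_2)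
qed

lemma J_image_wplus: "J m ` wplus m J = wminus m J"
proof
  show "J m ` wplus m J \<subseteq> wminus m J"
    using J_wplus m_in_range by blast
  show "wminus m J \<subseteq> J m ` wplus m J"
  proof
    fix y assume "y \<in> wminus m J"
    then have "- J m y \<in> wplus m J" and "y = J m (- J m y)"
      using J_wminus[OF m_in_range] subspace_neg[OF subspace_wplus] J_square[OF m_in_range]
        linear_neg[OF J_linear[OF m_in_range]] by auto
    then show "y \<in> J m ` wplus m J" by blast
  qed
qed

lemma dim_J_image: "i \<in> {1..m} \<Longrightarrow> dim (J i ` S) = dim S"
  by (rule dim_image_eq[OF J_linear]) (use J_inj in \<open>auto intro: inj_on_subset\<close>)

lemma dim_wplus: "2 * dim (wplus m J) = DIM('v)"
proof -
  have "x \<in> {p + q |p q. p \<in> wplus m J \<and> q \<in> wminus m J}" for x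
    by (rule Kop_invariant_decomp[of UNIV x]) auto
  then have "{p + q |p q. p \<in> wplus m J \<and> q \<in> wminus m J} = UNIV"
    by blast
  then have "DIM('v) = dim (wplus m J) + dim (wminus m J)"
    using dim_sums_Int[OF subspace_wplus subspace_wminus] wplus_Int_wminus by simp
  then show ?thesis
    using dim_J_image[OF m_in_range, of "wplus m J"] J_image_wplus by simp
qed

lemma subspace_perp_in_wplus: "subspace (perp_in_wplus m J L1)"
  by (simp add: perp_in_wplus_eq subspace_inter subspace_wplus subspace_orthogonal_comp)

lemma subspace_lag_of: "subspace L1 \<Longrightarrow> subspace (lag_of m J L1)"
  unfolding lag_of_eq_sums
  by (intro subspace_sums linear_subspace_image J_linear m_in_range subspace_perp_in_wplus)

lemma dim_lag_of:
  assumes "subspace L1" "L1 \<subseteq> wplus m J"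
  shows "dim (lag_of m J L1) = dim (wplus m J)"
proof -
  let ?P = "perp_in_wplus m J L1"
  have "L1 \<inter> J m ` ?P \<subseteq> wplus m J \<inter> wminus m J"
    using assms(2) J_wplus[OF m_in_range] by (auto simp: perp_in_wplus_eq)
  then have "dim (L1 \<inter> J m ` ?P) = 0"
    by (simp add: wplus_Int_wminus)
  moreover have "subspace (J m ` ?P)"
    by (intro linear_subspace_image J_linear m_in_range subspace_perp_in_wplus)
  ultimately have "dim (lag_of m J L1) = dim L1 + dim (J m ` ?P)"
    using dim_sums_Int[OF assms(1), of "J m ` ?P"] unfolding lag_of_eq_sums by linarith
  also have "dim (J m ` ?P) = dim ?P"
    by (rule dim_J_image[OF m_in_range])
  also have "?P = {y \<in> wplus m J. \<forall>x\<in>L1. orthogonal x y}"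
    by (auto simp: perp_in_wplus_eq orthogonal_comp_def)
  finally show ?thesis
    using dim_subspace_orthogonal_to_vectors[OF assms(1) subspace_wplus assms(2)] by simp
qed

lemma bracket_zero_lag_of:
  assumes "cplus_submodule_of_wplus m J L1"
  shows "bracket_zero m J (lag_of m J L1)"
  unfolding bracket_zero_def
proof (intro ballI)
  fix u v i
  assume "u \<in> lag_of m J L1" "v \<in> lag_of m J L1" and i: "i \<in> {1..m}"
  then obtain a b a' b' where u: "u = a + J m b" and v: "v = a' + J m b'"
    and a: "a \<in> L1" "a' \<in> L1" and b: "b \<in> perp_in_wplus m J L1" "b' \<in> perp_in_wplus m J L1"
    by (auto simp: lag_of_def)
  have L1: "L1 \<subseteq> wplus m J" "\<And>i j x. i \<in> {1..m} \<Longrightarrow> j \<in> {1..m} \<Longrightarrow> x \<in> L1 \<Longrightarrow> J i (J j x) \<in> L1"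
    using assms by (auto simp: cplus_submodule_of_wplus_def)
  have perp: "inner c x = 0" if "c \<in> perp_in_wplus m J L1" "x \<in> L1" for c x
    using that by (simp add: perp_in_wplus_def)
  have "inner (J i a) a' = 0"
    using wplus_wminus_orthogonal[of a' "J i a"] J_wplus[OF i] a L1(1) by (auto simp: inner_commute)
  moreover have "inner (J i a) (J m b') = 0"
    using J_skew[OF m_in_range, of "J i a" b'] perp[OF b(2) L1(2)[OF m_in_range i a(1)]]
    by (simp add: inner_commute)
  moreover have "inner (J i (J m b)) a' = 0"
    using J_skew[OF i, of "J m b" a'] J_skew[OF m_in_range, of b "J i a'"]
      perp[OF b(1) L1(2)[OF m_in_range i a(2)]] by simp
  moreover have "inner (J i (J m b)) (J m b') = 0"
    using b J_wplus[OF m_in_range] J_wminus[OF i] J_wplus[OF m_in_range]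
    by (intro wplus_wminus_orthogonal) (auto simp: perp_in_wplus_eq)
  ultimately show "inner (J i u) v = 0"
    using linear_add[OF J_linear[OF i]] by (simp add: u v inner_add_left inner_add_right)
qed

lemma lagrangian_lag_of:
  assumes "cplus_submodule_of_wplus m J L1"
  shows "lagrangian m J (lag_of m J L1)"
  using assms subspace_lag_of bracket_zero_lag_of dim_lag_of dim_wplus
  by (simp add: lagrangian_def cplus_submodule_of_wplus_def)

lemma lagrangian_J_image:
  assumes "lagrangian m J L" "i \<in> {1..m}"
  shows "J i ` L = L\<^sup>\<bottom>"
proof (rule image_eq_orthogonal_comp_if_half_dim)
  show "J i ` L \<subseteq> L\<^sup>\<bottom>"
    using lagrangian_isotropic[OF assms(1) _ _ assms(2)]
    by (auto simp: orthogonal_comp_def orthogonal_def inner_commute)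
qed (use assms J_linear J_inj lagrangian_subspace lagrangian_dim in auto)

lemma lagrangian_J_orthogonal_comp:
  assumes "lagrangian m J L" "i \<in> {1..m}"
  shows "J i ` (L\<^sup>\<bottom>) \<subseteq> L"
proof
  fix x assume "x \<in> J i ` (L\<^sup>\<bottom>)"
  then obtain z where z: "z \<in> L\<^sup>\<bottom>" "x = J i z"
    by blast
  then have "z \<in> J i ` L"
    by (simp add: lagrangian_J_image[OF assms])
  then obtain y where "y \<in> L" "x = J i (J i y)"
    using z(2) by blast
  then show "x \<in> L"
    using J_square[OF assms(2)] subspace_neg[OF lagrangian_subspace[OF assms(1)]] by simp
qed

lemma lagrangian_Kop_invariant:
  assumes "lagrangian m J L"
  shows "Kop J m ` L \<subseteq> L"
proof -
  have "Kop J m ` L \<subseteq> (if even m then L else L\<^sup>\<bottom>)"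
    by (rule conjunct1[OF Kop_image_alternating])
      (simp_all add: lagrangian_J_image[OF assms] lagrangian_J_orthogonal_comp[OF assms])
  moreover have "even m"
    using four_dvd_m by (simp add: dvd_trans[of 2 4 m])
  ultimately show ?thesis by simp
qed

lemma cplus_submodule_Int_wplus:
  assumes "lagrangian m J L"
  shows "cplus_submodule_of_wplus m J (L \<inter> wplus m J)"
  unfolding cplus_submodule_of_wplus_def
proof (intro conjI ballI)
  show "subspace (L \<inter> wplus m J)"
    using lagrangian_subspace[OF assms] subspace_wplus by (rule subspace_inter)
  fix i j x assume i: "i \<in> {1..m}" and j: "j \<in> {1..m}" and x: "x \<in> L \<inter> wplus m J"
  have "J j x \<in> L\<^sup>\<bottom>"
    using x lagrangian_J_image[OF assms j] by blast
  then have "J i (J j x) \<in> L"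
    using lagrangian_J_orthogonal_comp[OF assms i] by blast
  moreover have "J i (J j x) \<in> wplus m J"
    using x J_wplus[OF j] J_wminus[OF i] by blast
  ultimately show "J i (J j x) \<in> L \<inter> wplus m J" by blast
qed simp

lemma lagrangian_subset_lag_of:
  assumes "lagrangian m J L"
  shows "L \<subseteq> lag_of m J (L \<inter> wplus m J)"
proof
  fix x assume "x \<in> L"
  then obtain p q where p: "p \<in> L \<inter> wplus m J" and q: "q \<in> L \<inter> wminus m J" and x: "x = p + q"
    using Kop_invariant_decomp[OF lagrangian_subspace lagrangian_Kop_invariant] assms by metis
  define b where "b = - J m q"
  have "J m b = q"
    using J_square[OF m_in_range] linear_neg[OF J_linear[OF m_in_range]] by (simp add: b_def)
  moreover have "b \<in> perp_in_wplus m J (L \<inter> wplus m J)"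
  proof -
    have "inner b a = 0" if "a \<in> L" for a
      using lagrangian_isotropic[OF assms _ that m_in_range, of q] q by (simp add: b_def)
    moreover have "b \<in> wplus m J"
      using q J_wminus[OF m_in_range] subspace_neg[OF subspace_wplus] by (simp add: b_def)
    ultimately show ?thesis by (simp add: perp_in_wplus_def)
  qed
  ultimately show "x \<in> lag_of m J (L \<inter> wplus m J)"
    using p x by (auto simp: lag_of_def)
qed

lemma lagrangian_eq_lag_of:
  assumes "lagrangian m J L"
  shows "L = lag_of m J (L \<inter> wplus m J)"
proof (rule subspace_dim_equal)
  have "subspace (L \<inter> wplus m J)"
    using cplus_submodule_Int_wplus[OF assms] by (simp add: cplus_submodule_of_wplus_def)
  then show "subspace (lag_of m J (L \<inter> wplus m J))"
    and "dim (lag_of m J (L \<inter> wplus m J)) \<le> dim L"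
    using subspace_lag_of dim_lag_of dim_wplus lagrangian_dim[OF assms] by auto
qed (use assms lagrangian_subset_lag_of lagrangian_subspace in auto)

end

end

theorem lemma5p17:
  fixes J :: "nat \<Rightarrow> 'v::euclidean_space \<Rightarrow> 'v" and m :: nat
  assumes "clifford_module m J"
    and "m mod 8 = 4"
  shows "(\<forall>L1. cplus_submodule_of_wplus m J L1 \<longrightarrow> lagrangian m J (lag_of m J L1))
       \<and> (\<forall>L. lagrangian m J L \<longrightarrow>
              (\<exists>L1. cplus_submodule_of_wplus m J L1 \<and> L = lag_of m J L1))"
proof -
  have "4 dvd m" "0 < m"
    using assms(2) by presburger+
  then show ?thesis
    using lagrangian_lag_of[OF assms(1)] lagrangian_eq_lag_of[OF assms(1)]
      cplus_submodule_Int_wplus[OF assms(1)] by blast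
qed

end
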